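(* Let $d,k\ge 1$ be integers. Define $C_{d,k}$ as follows. If $d$ is odd, write $k=(d+1)q/2+r$ with integers $q\ge 0$ and $1\le r\le (d+1)/2$, and set $$C_{d,k}=(q+1)\left(1+\frac{r-1}{(d+1)(q+2)/2-(r-1)}\right).$$ If $d$ is even, write $k=(d+1)q+r$ with integers $q\ge 0$ and $1\le r\le d+1$, and set $$C_{d,k}=\begin{cases}(2q+1)\left(1+\dfrac{r-1}{(d+1)(q+1)-(r-1)}\right) & \text{if } 1\le r\le d/2+1,\\[2mm] (2q+3)\left(1-\dfrac{d+2-r}{(d+1)(q+1)+(d+2-r)}\right) & \text{otherwise.}\end{cases}$$ Then there is a constant $K_{d,k}$ depending only on $d$ and $k$ such that $f(n,d,k)\le C_{d,k}\,n+K_{d,k}$ for all integers $n\ge 1$.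
   Context: For integers $d\ge 1$, $n\ge 1$, $T_d(n)=\{(x_1,\dots,x_d)\in\mathbb{Z}_{\ge 0}^d : x_1+\dots+x_d\le n-1\}$. A $k$-cover of $T_d(n)$ is a finite multiset of affine hyperplanes in $\mathbb{R}^d$ such that every point of $T_d(n)$ lies in at least $k$ of them (with multiplicity). $f(n,d,k)$ is the minimum cardinality of a $k$-cover of $T_d(n)$. *)

theory Defs
  imports Main "HOL-Library.Multiset" Complex_Main
begin

text \<open>Points of R^d are modelled as functions nat => real vanishing outside {0..<d}.\<close>

definition pt :: "nat \<Rightarrow> (nat \<Rightarrow> real) \<Rightarrow> bool" where
  "pt d x \<longleftrightarrow> (\<forall>i\<ge>d. x i = 0)"

definition affine_hyperplane :: "nat \<Rightarrow> (nat \<Rightarrow> real) set \<Rightarrow> bool" where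
  "affine_hyperplane d H \<longleftrightarrow>
     (\<exists>a b. (\<exists>i<d. a i \<noteq> 0) \<and> H = {x. pt d x \<and> (\<Sum>i<d. a i * x i) = b})"

definition T :: "nat \<Rightarrow> nat \<Rightarrow> (nat \<Rightarrow> real) set" where
  "T d n = {x. \<exists>y::nat \<Rightarrow> nat. (\<forall>i\<ge>d. y i = 0) \<and> (\<Sum>i<d. y i) + 1 \<le> n
                \<and> x = (\<lambda>i. real (y i))}"

definition k_cover :: "nat \<Rightarrow> nat \<Rightarrow> nat \<Rightarrow> (nat \<Rightarrow> real) set multiset \<Rightarrow> bool" where
  "k_cover n d k M \<longleftrightarrow> (\<forall>H\<in>#M. affine_hyperplane d H) \<and>
     (\<forall>p\<in>T d n. k \<le> size (filter_mset (\<lambda>H. p \<in> H) M))"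

definition f :: "nat \<Rightarrow> nat \<Rightarrow> nat \<Rightarrow> nat" where
  "f n d k = (LEAST m. \<exists>M. k_cover n d k M \<and> size M = m)"

definition C :: "nat \<Rightarrow> nat \<Rightarrow> real" where
  "C d k =
    (if odd d then
       (let m = (d + 1) div 2; q = (k - 1) div m; r = (k - 1) mod m + 1 in
        (real q + 1) * (1 + (real r - 1) / (real (d + 1) * (real q + 2) / 2 - (real r - 1))))
     else
       (let q = (k - 1) div (d + 1); r = (k - 1) mod (d + 1) + 1 in
        if r \<le> d div 2 + 1 then
          (2 * real q + 1) * (1 + (real r - 1) / (real (d + 1) * (real q + 1) - (real r - 1)))
        else
          (2 * real q + 3) * (1 - (real d + 2 - real r) / (real (d + 1) * (real q + 1) + (real d + 2 - real r)))))"

end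

theory Submission
  imports Defs
begin

text \<open>
Write a point of \<open>T_d(n)\<close> in barycentric coordinates \<open>z\<^sub>0, \<dots>, z\<^sub>d\<close>, where
\<open>z\<^sub>d = N - (z\<^sub>0 + \<dots> + z\<^sub>d\<^sub>-\<^sub>1)\<close> and \<open>N = n - 1\<close>, so that \<open>\<Sum> z\<^sub>i = N\<close>.
Fix \<open>p\<close> with \<open>k \<le> (d+1)p\<close> and put \<open>M = (d+1)p - k + 1\<close>. For every coordinate \<open>i\<close> and
every \<open>j = 1, \<dots>, p\<close> take the hyperplanes \<open>z\<^sub>i = c\<close> for \<open>0 \<le> c \<le> jN/M\<close>; a point lies on
the \<open>(i,j)\<close> block iff \<open>M z\<^sub>i \<le> jN\<close>. Since \<open>\<Sum> z\<^sub>i = N\<close>, fewer than \<open>M\<close> of the \<open>(d+1)p\<close>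
pairs \<open>(i,j)\<close> fail this, so every point is covered at least \<open>k\<close> times. The cover has
about \<open>(d+1)p(p+1)N/(2M)\<close> hyperplanes, and the choice \<open>p = q+1\<close> (\<open>d\<close> odd), resp.
\<open>p = 2q+1\<close> or \<open>p = 2q+2\<close> (\<open>d\<close> even), makes this slope exactly \<open>C\<^sub>d\<^sub>,\<^sub>k\<close>.
\<close>

lemma card_multiples_less:
  fixes N b p :: nat
  defines "S \<equiv> {j\<in>{1..p}. j * N < b}"
  shows "card S * N \<le> b" and "S \<noteq> {} \<Longrightarrow> card S * N < b"
proof -
  have strict: "card S * N < b" if "S \<noteq> {}"
  proof -
    have "finite S" unfolding S_def by simp
    define m where "m = Max S"
    have "m \<in> S" using Max_in[OF \<open>finite S\<close> that] m_def by simp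
    have "S \<subseteq> {1..m}" using Max_ge[OF \<open>finite S\<close>] m_def unfolding S_def by auto
    then have "card S * N \<le> m * N" using card_mono[of "{1..m}" S] by simp
    also have "m * N < b" using \<open>m \<in> S\<close> unfolding S_def by simp
    finally show ?thesis .
  qed
  then show "S \<noteq> {} \<Longrightarrow> card S * N < b" .
  show "card S * N \<le> b" using strict by (cases "S = {}") auto
qed

lemma sum_card_threshold_ge:
  fixes z :: "'a \<Rightarrow> nat" and I :: "'a set"
  assumes "finite I" and sum_z: "(\<Sum>i\<in>I. z i) = N"
    and k_le: "k \<le> card I * p" and M_def: "M = card I * p - k + 1"
  shows "k \<le> (\<Sum>i\<in>I. card {j\<in>{1..p}. M * z i \<le> j * N})"
proof -
  define c where "c i = card {j\<in>{1..p}. j * N < M * z i}" for i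
  have split: "card {j\<in>{1..p}. M * z i \<le> j * N} + c i = p" for i
  proof -
    have "{1..p} = {j\<in>{1..p}. M * z i \<le> j * N} \<union> {j\<in>{1..p}. j * N < M * z i}" by auto
    then show ?thesis unfolding c_def
      by (metis (no_types, lifting) card_Un_disjoint card_atLeastAtMost diff_Suc_1
          disjoint_iff finite_Un finite_atLeastAtMost mem_Collect_eq not_le)
  qed
  have few_failing: "(\<Sum>i\<in>I. c i) < M"
  proof (cases "\<forall>i\<in>I. c i = 0")
    case True
    then show ?thesis using M_def by simp
  next
    case False
    then obtain i0 where "i0 \<in> I" "c i0 \<noteq> 0" by auto
    then have "{j\<in>{1..p}. j * N < M * z i0} \<noteq> {}" unfolding c_def by (metis card.empty)
    then have "c i0 * N < M * z i0" unfolding c_def by (rule card_multiples_less(2))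
    moreover have "c i * N \<le> M * z i" for i unfolding c_def by (rule card_multiples_less(1))
    ultimately have "(\<Sum>i\<in>I. c i * N) < (\<Sum>i\<in>I. M * z i)"
      using \<open>finite I\<close> \<open>i0 \<in> I\<close> by (intro sum_strict_mono_ex1) auto
    also have "\<dots> = M * N" using sum_z by (simp add: sum_distrib_left[symmetric])
    finally have "(\<Sum>i\<in>I. c i) * N < M * N" by (simp add: sum_distrib_right)
    then show ?thesis by (metis mult_less_cancel2)
  qed
  have "(\<Sum>i\<in>I. card {j\<in>{1..p}. M * z i \<le> j * N}) + (\<Sum>i\<in>I. c i) = card I * p"
    using split by (simp add: sum.distrib[symmetric])
  then show ?thesis using few_failing k_le M_def by linarith
qed

text \<open>Index \<open>i = d\<close> stands for the extra barycentric coordinate \<open>N - \<Sum>\<^sub>l\<^sub><\<^sub>d x\<^sub>l\<close>.\<close>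

definition level_hyperplane :: "nat \<Rightarrow> nat \<Rightarrow> nat \<Rightarrow> nat \<Rightarrow> (nat \<Rightarrow> real) set" where
  "level_hyperplane d N i c =
     {x. pt d x \<and> (if i < d then x i = real c else (\<Sum>l<d. x l) = real N - real c)}"

lemma affine_hyperplane_level_hyperplane:
  assumes "1 \<le> d"
  shows "affine_hyperplane d (level_hyperplane d N i c)"
proof (cases "i < d")
  case True
  define a :: "nat \<Rightarrow> real" where "a l = (if l = i then 1 else 0)" for l
  have "(\<Sum>l<d. a l * x l) = x i" for x
  proof -
    have "(\<Sum>l<d. a l * x l) = (\<Sum>l<d. if l = i then x l else 0)"
      by (rule sum.cong) (auto simp: a_def)
    then show ?thesis using True by simp
  qed
  then have "level_hyperplane d N i c = {x. pt d x \<and> (\<Sum>l<d. a l * x l) = real c}"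
    using True unfolding level_hyperplane_def by simp
  moreover have "a i \<noteq> 0" by (simp add: a_def)
  ultimately show ?thesis unfolding affine_hyperplane_def using True by blast
next
  case False
  have "level_hyperplane d N i c = {x. pt d x \<and> (\<Sum>l<d. 1 * x l) = real N - real c}"
    using False unfolding level_hyperplane_def by simp
  then show ?thesis unfolding affine_hyperplane_def using assms
    by (intro exI[of _ "\<lambda>_. 1"] exI[of _ "real N - real c"]) (auto intro: exI[of _ 0])
qed

lemma T_barycentric_coordinates:
  assumes "x \<in> T d n"
  shows "\<exists>z. (\<Sum>i\<le>d. z i) = n - 1 \<and> (\<forall>i\<le>d. x \<in> level_hyperplane d (n - 1) i (z i))"
proof -
  obtain y :: "nat \<Rightarrow> nat" where y0: "\<forall>i\<ge>d. y i = 0" and y_sum: "(\<Sum>i<d. y i) + 1 \<le> n"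
    and x_def: "x = (\<lambda>i. real (y i))"
    using assms unfolding T_def by blast
  define z where "z i = (if i < d then y i else n - 1 - (\<Sum>l<d. y l))" for i
  have "(\<Sum>i\<le>d. z i) = (\<Sum>i<d. z i) + z d" by (simp add: lessThan_Suc_atMost[symmetric])
  also have "(\<Sum>i<d. z i) = (\<Sum>i<d. y i)" unfolding z_def by simp
  finally have "(\<Sum>i\<le>d. z i) = n - 1" unfolding z_def using y_sum by simp
  moreover have "real (n - 1 - (\<Sum>l<d. y l)) = real (n - 1) - (\<Sum>l<d. real (y l))"
    using y_sum by (simp add: of_nat_diff)
  then have "x \<in> level_hyperplane d (n - 1) i (z i)" for i
    using y0 unfolding level_hyperplane_def pt_def z_def x_def by simp
  ultimately show ?thesis by blast
qed

definition level_cover :: "nat \<Rightarrow> nat \<Rightarrow> nat \<Rightarrow> nat \<Rightarrow> (nat \<Rightarrow> real) set multiset" where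
  "level_cover d N p M =
     image_mset (\<lambda>(i, j, c). level_hyperplane d N i c)
       (mset_set (SIGMA i:{..d}. SIGMA j:{1..p}. {..j * N div M}))"

lemma k_cover_level_cover:
  assumes "1 \<le> d" and "k \<le> (d + 1) * p"
  shows "k_cover n d k (level_cover d (n - 1) p ((d + 1) * p - k + 1))"
  unfolding k_cover_def
proof (intro conjI ballI)
  fix H assume "H \<in># level_cover d (n - 1) p ((d + 1) * p - k + 1)"
  then show "affine_hyperplane d H"
    unfolding level_cover_def using affine_hyperplane_level_hyperplane[OF assms(1)] by auto
next
  fix x assume "x \<in> T d n"
  define N M where "N = n - 1" and "M = (d + 1) * p - k + 1"
  define Idx where "Idx = (SIGMA i:{..d}. SIGMA j:{1..p}. {..j * N div M})"
  define F :: "nat \<times> nat \<times> nat \<Rightarrow> (nat \<Rightarrow> real) set"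
    where "F = (\<lambda>(i, j, c). level_hyperplane d N i c)"
  obtain z where sum_z: "(\<Sum>i\<le>d. z i) = N" and on: "\<forall>i\<le>d. x \<in> level_hyperplane d N i (z i)"
    using T_barycentric_coordinates[OF \<open>x \<in> T d n\<close>] N_def by blast
  define P where "P = (SIGMA i:{..d}. {j\<in>{1..p}. M * z i \<le> j * N})"
  have "k \<le> (\<Sum>i\<le>d. card {j\<in>{1..p}. M * z i \<le> j * N})"
    using sum_card_threshold_ge[OF _ sum_z] assms(2) M_def by simp
  also have "\<dots> = card P" unfolding P_def by (rule card_SigmaI[symmetric]) auto
  also have "card P \<le> card {t\<in>Idx. x \<in> F t}"
  proof (rule card_inj_on_le[where f = "\<lambda>(i, j). (i, j, z i)"])
    show "inj_on (\<lambda>(i, j). (i, j, z i)) P" by (auto simp: inj_on_def)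
    show "finite {t\<in>Idx. x \<in> F t}" unfolding Idx_def by simp
    have "z i \<le> j * N div M" if "M * z i \<le> j * N" for i j
      using that by (simp add: M_def less_eq_div_iff_mult_less_eq mult.commute)
    then show "(\<lambda>(i, j). (i, j, z i)) ` P \<subseteq> {t\<in>Idx. x \<in> F t}"
      using on unfolding P_def Idx_def F_def by auto
  qed
  also have "card {t\<in>Idx. x \<in> F t} = size (filter_mset (\<lambda>H. x \<in> H) (image_mset F (mset_set Idx)))"
    unfolding filter_mset_image_mset Idx_def by (simp add: filter_mset_mset_set)
  finally show "k \<le> size (filter_mset (\<lambda>H. x \<in> H) (level_cover d (n - 1) p ((d + 1) * p - k + 1)))"
    unfolding level_cover_def F_def Idx_def N_def M_def .
qed

lemma size_level_cover_le:
  assumes "0 < M"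
  shows "real (size (level_cover d N p M))
           \<le> real ((d + 1) * p * (p + 1)) / (2 * real M) * real N + real ((d + 1) * p)"
proof -
  have floor_le: "real (j * N div M) \<le> real j * real N / real M" for j
    using assms by (simp add: pos_le_divide_eq)
      (metis of_nat_le_iff of_nat_mult times_div_less_eq_dividend mult.commute)
  have gauss: "(\<Sum>j\<in>{1..q}. real j) = real q * (real q + 1) / 2" for q :: nat
    by (induction q) (auto simp: field_simps)
  have "real (size (level_cover d N p M)) = (\<Sum>i\<le>d. \<Sum>j\<in>{1..p}. real (j * N div M) + 1)"
    unfolding level_cover_def by (simp add: card_SigmaI add.commute algebra_simps)
  also have "\<dots> \<le> (\<Sum>i\<le>d. \<Sum>j\<in>{1..p}. real j * real N / real M + 1)"
    by (intro sum_mono add_right_mono floor_le)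
  also have "\<dots> = real (d + 1) * ((\<Sum>j\<in>{1..p}. real j) * real N / real M + real p)"
    by (simp add: sum.distrib sum_divide_distrib[symmetric] sum_distrib_right[symmetric])
  also have "\<dots> = real ((d + 1) * p * (p + 1)) / (2 * real M) * real N + real ((d + 1) * p)"
    unfolding gauss by (simp add: field_simps)
  finally show ?thesis .
qed

lemma f_le_size:
  assumes "k_cover n d k M"
  shows "f n d k \<le> size M"
  unfolding f_def by (rule Least_le) (use assms in blast)

lemma f_le_linear:
  assumes "1 \<le> d" and "1 \<le> n" and "k \<le> (d + 1) * p"
  shows "real (f n d k)
           \<le> real ((d + 1) * p * (p + 1)) / (2 * real ((d + 1) * p - k + 1)) * real n
             + real ((d + 1) * p)"
proof -
  let ?M = "(d + 1) * p - k + 1"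
  have "real (f n d k) \<le> real (size (level_cover d (n - 1) p ?M))"
    using f_le_size[OF k_cover_level_cover[OF assms(1,3)]] by simp
  also have "\<dots> \<le> real ((d + 1) * p * (p + 1)) / (2 * real ?M) * real (n - 1) + real ((d + 1) * p)"
    by (rule size_level_cover_le) simp
  also have "\<dots> \<le> real ((d + 1) * p * (p + 1)) / (2 * real ?M) * real n + real ((d + 1) * p)"
    by (intro add_right_mono mult_left_mono) auto
  finally show ?thesis .
qed

lemma C_odd_eq_slope:
  assumes "odd d" and "1 \<le> k"
  shows "\<exists>p. k \<le> (d + 1) * p \<and>
           C d k = real ((d + 1) * p * (p + 1)) / (2 * real ((d + 1) * p - k + 1))"
proof -
  define m q r where "m = (d + 1) div 2" and "q = (k - 1) div m" and "r = (k - 1) mod m + 1"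
  have d_eq: "d + 1 = 2 * m" using assms(1) m_def by auto
  have k_eq: "k = m * q + r" unfolding q_def r_def using assms(2) div_mult_mod_eq[of "k - 1" m]
    by (simp add: mult.commute)
  have "r \<le> m" unfolding r_def using d_eq by (auto simp: Suc_le_eq)
  then have k_le: "k \<le> (d + 1) * (q + 1)" using k_eq d_eq by (simp add: algebra_simps)
  have M_eq: "real ((d + 1) * (q + 1) - k + 1) = real m * (real q + 2) - (real r - 1)"
    using k_eq \<open>r \<le> m\<close> d_eq k_le by (simp add: of_nat_diff algebra_simps)
  then have "real m * (real q + 2) - (real r - 1) > 0" by linarith
  have "C d k = (real q + 1) * (1 + (real r - 1) / (real (d + 1) * (real q + 2) / 2 - (real r - 1)))"
    unfolding C_def using assms(1) m_def q_def r_def by (simp add: Let_def)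
  also have "\<dots> = real ((d + 1) * (q + 1) * (q + 1 + 1)) / (2 * real ((d + 1) * (q + 1) - k + 1))"
    unfolding M_eq using \<open>_ > 0\<close> d_eq by (simp add: field_simps)
  finally show ?thesis using k_le by blast
qed

lemma C_even_eq_slope:
  assumes "even d" and "1 \<le> k"
  shows "\<exists>p. k \<le> (d + 1) * p \<and>
           C d k = real ((d + 1) * p * (p + 1)) / (2 * real ((d + 1) * p - k + 1))"
proof -
  define D q r where "D = d + 1" and "q = (k - 1) div D" and "r = (k - 1) mod D + 1"
  have k_eq: "k = D * q + r" unfolding q_def r_def using assms(2) div_mult_mod_eq[of "k - 1" D]
    by (simp add: mult.commute)
  have "r \<le> D" unfolding r_def D_def by (auto simp: Suc_le_eq)
  show ?thesis
  proof (cases "r \<le> d div 2 + 1")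
    case True
    have k_le: "k \<le> (d + 1) * (2 * q + 1)" using k_eq \<open>r \<le> D\<close> D_def by (simp add: algebra_simps)
    have M_eq: "real ((d + 1) * (2 * q + 1) - k + 1) = real D * (real q + 1) - (real r - 1)"
      using k_eq \<open>r \<le> D\<close> D_def k_le by (simp add: of_nat_diff algebra_simps)
    then have "real D * (real q + 1) - (real r - 1) > 0" by linarith
    have "C d k = (2 * real q + 1) * (1 + (real r - 1) / (real (d + 1) * (real q + 1) - (real r - 1)))"
      unfolding C_def using assms(1) True D_def q_def r_def by (simp add: Let_def)
    also have "\<dots> = real ((d + 1) * (2 * q + 1) * (2 * q + 1 + 1))
                     / (2 * real ((d + 1) * (2 * q + 1) - k + 1))"
      unfolding M_eq using \<open>_ > 0\<close> D_def by (simp add: field_simps)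
    finally show ?thesis using k_le by blast
  next
    case False
    have k_le: "k \<le> (d + 1) * (2 * q + 2)" using k_eq \<open>r \<le> D\<close> D_def by (simp add: algebra_simps)
    have M_eq: "real ((d + 1) * (2 * q + 2) - k + 1) = real D * (real q + 1) + (real d + 2 - real r)"
      using k_eq \<open>r \<le> D\<close> D_def k_le by (simp add: of_nat_diff algebra_simps)
    then have "real D * (real q + 1) + (real d + 2 - real r) > 0" by linarith
    have "C d k = (2 * real q + 3)
                  * (1 - (real d + 2 - real r) / (real (d + 1) * (real q + 1) + (real d + 2 - real r)))"
      unfolding C_def using assms(1) False D_def q_def r_def by (simp add: Let_def)
    also have "\<dots> = real ((d + 1) * (2 * q + 2) * (2 * q + 2 + 1))
                     / (2 * real ((d + 1) * (2 * q + 2) - k + 1))"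
      unfolding M_eq using \<open>_ > 0\<close> D_def by (simp add: field_simps)
    finally show ?thesis using k_le by blast
  qed
qed

theorem mainTheorem10:
  fixes d k :: nat
  assumes "1 \<le> d" and "1 \<le> k"
  shows "\<exists>K::real. \<forall>n::nat. 1 \<le> n \<longrightarrow> real (f n d k) \<le> C d k * real n + K"
proof -
  obtain p where k_le: "k \<le> (d + 1) * p"
    and C_eq: "C d k = real ((d + 1) * p * (p + 1)) / (2 * real ((d + 1) * p - k + 1))"
    using C_odd_eq_slope C_even_eq_slope assms(2) by blast
  have "\<forall>n. 1 \<le> n \<longrightarrow> real (f n d k) \<le> C d k * real n + real ((d + 1) * p)"
    using f_le_linear[OF assms(1) _ k_le] unfolding C_eq by blast
  then show ?thesis by blast
qed

end
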